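(* Let $m,n\geq 2$ and let $V\subset [m]\times[n]$. Then: (i) if $V$ is a forest with $k$ connected components, then $V$ is complete if and only if $|V|=m+n-k$; (ii) if $|V|=m+n-1$, then $V$ is a tree if and only if $V$ is complete and connected; (iii) if $V$ is complete and connected, then $|V|\geq m+n-1$, and $|V|=m+n-1$ if and only if $V$ is a tree.
   Context: $[m]=\{1,\dots,m\}$. $G_{m,n}$ is the graph with vertex set $[m]\times[n]$ in which two distinct vertices $u=(u_1,u_2)$, $v=(v_1,v_2)$ are adjacent iff $u_1=v_1$ or $u_2=v_2$ (same row or same column). A subset $V\subset[m]\times[n]$ is regarded as the induced subgraph of $G_{m,n}$; a path in $V$ is a sequence of vertices of $V$ in which consecutive vertices are adjacent; $V$ is connected if any two distinct vertices of $V$ are joined by a path in $V$, and connected components are understood for this induced graph. A circuit is a cyclic sequence $v_0,v_1,\dots,v_{s-1}$ ($s\ge 4$) of pairwise distinct vertices $v_k=(i_k,j_k)$ such that, with indices taken modulo $s$, $v_k$ and $v_{k+1}$ are adjacent and $(i_{k+2}-i_k)(j_{k+2}-j_k)\neq 0$ for every $k$ (no three cyclically consecutive vertices lie in one row or one column). $V$ is a forest if it contains no circuit, and a tree if it is a connected forest. $V$ is complete if $\{i:(i,j)\in V\}=[m]$ and $\{j:(i,j)\in V\}=[n]$. *)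

theory Defs
  imports Main
begin

type_synonym cell = "nat \<times> nat"

definition grid :: "nat \<Rightarrow> nat \<Rightarrow> cell set" where
  "grid m n = {1..m} \<times> {1..n}"

definition rook_adj :: "cell \<Rightarrow> cell \<Rightarrow> bool" where
  "rook_adj u v \<longleftrightarrow> u \<noteq> v \<and> (fst u = fst v \<or> snd u = snd v)"

definition is_path_in :: "cell set \<Rightarrow> cell list \<Rightarrow> bool" where
  "is_path_in V p \<longleftrightarrow> p \<noteq> [] \<and> set p \<subseteq> V \<and>
     (\<forall>i. Suc i < length p \<longrightarrow> rook_adj (p ! i) (p ! Suc i))"

definition joined_in :: "cell set \<Rightarrow> cell \<Rightarrow> cell \<Rightarrow> bool" where
  "joined_in V u v \<longleftrightarrow> (\<exists>p. is_path_in V p \<and> hd p = u \<and> last p = v)"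

definition connected_set :: "cell set \<Rightarrow> bool" where
  "connected_set V \<longleftrightarrow> (\<forall>u\<in>V. \<forall>v\<in>V. u \<noteq> v \<longrightarrow> joined_in V u v)"

definition components :: "cell set \<Rightarrow> cell set set" where
  "components V = V // {(u, v). u \<in> V \<and> v \<in> V \<and> joined_in V u v}"

text \<open>A circuit: a cyclic sequence of s \<ge> 4 pairwise distinct vertices of V,
  cyclically consecutive ones adjacent, and no three cyclically consecutive ones
  in a single row or column.\<close>
definition is_circuit_in :: "cell set \<Rightarrow> cell list \<Rightarrow> bool" where
  "is_circuit_in V c \<longleftrightarrow> length c \<ge> 4 \<and> distinct c \<and> set c \<subseteq> V \<and>
     (\<forall>k < length c.
        rook_adj (c ! k) (c ! ((k + 1) mod length c)) \<and>
        (int (fst (c ! ((k + 2) mod length c))) - int (fst (c ! k))) *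
        (int (snd (c ! ((k + 2) mod length c))) - int (snd (c ! k))) \<noteq> 0)"

definition forest :: "cell set \<Rightarrow> bool" where
  "forest V \<longleftrightarrow> \<not> (\<exists>c. is_circuit_in V c)"

definition tree :: "cell set \<Rightarrow> bool" where
  "tree V \<longleftrightarrow> connected_set V \<and> forest V"

definition complete :: "nat \<Rightarrow> nat \<Rightarrow> cell set \<Rightarrow> bool" where
  "complete m n V \<longleftrightarrow> fst ` V = {1..m} \<and> snd ` V = {1..n}"

end

theory Submission
  imports Defs
begin

text \<open>Write line_count V for the number of rows plus the number of columns met by V.
  A connected V is grown from a single cell by adding, one at a time, a cell adjacent to the part
  already built. If the new cell opens a new row or column, it lies on no circuit, since a circuit
  turns at each of its cells. Otherwise its row and its column are both met by the old part, and a
  shortest path there from that row to that column closes up through the new cell to a circuit.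
  Hence a connected V has line_count V = card V + 1 if it is a forest and line_count V \<le> card V
  otherwise. The components of V meet pairwise disjoint sets of rows and columns, so a forest with
  k components has line_count V = card V + k; and V \<subseteq> [m] \<times> [n] is complete iff
  line_count V = m + n.\<close>

lemma is_path_in_iff: "is_path_in V p \<longleftrightarrow> p \<noteq> [] \<and> set p \<subseteq> V \<and> successively rook_adj p"
  unfolding is_path_in_def successively_conv_nth by blast

lemma rook_adj_sym: "rook_adj u v \<Longrightarrow> rook_adj v u"
  unfolding rook_adj_def by auto

lemma is_path_in_append:
  "is_path_in V p \<Longrightarrow> is_path_in V q \<Longrightarrow> rook_adj (last p) (hd q) \<Longrightarrow> is_path_in V (p @ q)"
  by (auto simp: is_path_in_iff successively_append_iff)

lemma is_path_in_take: "is_path_in V p \<Longrightarrow> 0 < k \<Longrightarrow> is_path_in V (take k p)"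
  by (auto simp: is_path_in_iff dest: in_set_takeD)
     (metis append_take_drop_id successively_append_iff)

lemma is_path_in_drop: "is_path_in V p \<Longrightarrow> k < length p \<Longrightarrow> is_path_in V (drop k p)"
  by (auto simp: is_path_in_iff dest: in_set_dropD)
     (metis append_take_drop_id successively_append_iff)

lemma joined_in_refl: "u \<in> V \<Longrightarrow> joined_in V u u"
  unfolding joined_in_def by (rule exI[of _ "[u]"]) (simp add: is_path_in_iff)

lemma joined_in_sym:
  assumes "joined_in V u v"
  shows "joined_in V v u"
proof -
  obtain p where p: "is_path_in V p" "hd p = u" "last p = v"
    using assms unfolding joined_in_def by blast
  then have "is_path_in V (rev p)"
    by (auto simp: is_path_in_iff successively_rev rook_adj_sym elim: successively_mono)
  moreover have "hd (rev p) = v" "last (rev p) = u"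
    using p by (simp_all add: hd_rev last_rev)
  ultimately show ?thesis
    unfolding joined_in_def by blast
qed

lemma joined_in_trans:
  assumes "joined_in V u v" "joined_in V v w"
  shows "joined_in V u w"
proof -
  obtain p q where p: "is_path_in V p" "hd p = u" "last p = v"
    and q: "is_path_in V q" "hd q = v" "last q = w"
    using assms unfolding joined_in_def by blast
  have "is_path_in V (p @ tl q) \<and> hd (p @ tl q) = u \<and> last (p @ tl q) = w"
    using p q by (cases q) (auto simp: is_path_in_iff successively_append_iff successively_Cons)
  then show ?thesis
    unfolding joined_in_def by blast
qed

lemma joined_in_mono: "joined_in V u v \<Longrightarrow> V \<subseteq> W \<Longrightarrow> joined_in W u v"
  unfolding joined_in_def is_path_in_iff by blast

lemma joined_in_imp_mem: "joined_in V u v \<Longrightarrow> u \<in> V \<and> v \<in> V"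
  unfolding joined_in_def is_path_in_iff by (metis hd_in_set last_in_set subsetD)

lemma joined_in_if_rook_adj: "u \<in> V \<Longrightarrow> v \<in> V \<Longrightarrow> rook_adj u v \<Longrightarrow> joined_in V u v"
  unfolding joined_in_def is_path_in_iff by (rule exI[of _ "[u, v]"]) auto

lemma joined_in_hd_mem:
  assumes p: "is_path_in V p" and "x \<in> set p"
  shows "joined_in V (hd p) x"
proof -
  obtain i where i: "i < length p" "p ! i = x"
    using \<open>x \<in> set p\<close> by (auto simp: in_set_conv_nth)
  have "is_path_in V (take (Suc i) p)" "hd (take (Suc i) p) = hd p"
    using p by (simp_all add: is_path_in_take)
  moreover have "last (take (Suc i) p) = x"
    using i by (simp add: take_Suc_conv_app_nth)
  ultimately show ?thesis
    unfolding joined_in_def by blast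
qed

lemma connected_set_iff: "connected_set V \<longleftrightarrow> (\<forall>u\<in>V. \<forall>v\<in>V. joined_in V u v)"
  unfolding connected_set_def by (metis joined_in_refl)

lemma connected_set_singleton: "connected_set {v}"
  unfolding connected_set_def by simp

lemma connected_set_insert:
  assumes "connected_set W" "w \<in> W" "rook_adj w e"
  shows "connected_set (insert e W)"
proof -
  have "joined_in (insert e W) x w" if "x \<in> insert e W" for x
  proof (cases "x = e")
    case False
    then have "joined_in W x w" using that assms unfolding connected_set_iff by blast
    then show ?thesis by (rule joined_in_mono) blast
  qed (use assms in \<open>auto intro: joined_in_if_rook_adj rook_adj_sym\<close>)
  then show ?thesis
    unfolding connected_set_iff by (blast intro: joined_in_trans joined_in_sym)
qed

lemma path_leaves_set:
  "p \<noteq> [] \<Longrightarrow> successively rook_adj p \<Longrightarrow> hd p \<in> W \<Longrightarrow> last p \<notin> W \<Longrightarrow>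
   \<exists>x\<in>W. \<exists>y\<in>set p - W. rook_adj x y"
proof (induction p rule: induct_list012)
  case (3 a b p)
  then show ?case by (cases "b \<in> W") auto
qed auto

lemma connected_set_grow:
  assumes "connected_set V" "W \<subseteq> V" "W \<noteq> {}" "W \<noteq> V"
  shows "\<exists>w\<in>W. \<exists>e\<in>V - W. rook_adj w e"
proof -
  obtain w v where wv: "w \<in> W" "v \<in> V - W" using assms by blast
  then have "joined_in V w v" using assms unfolding connected_set_iff by blast
  then obtain p where p: "is_path_in V p" "hd p = w" "last p = v" unfolding joined_in_def by blast
  then show ?thesis
    using path_leaves_set[of p W] wv by (auto simp: is_path_in_iff)
qed

lemma connected_set_induct [consumes 3, case_names singleton insert]:
  assumes "finite V" "connected_set V" "V \<noteq> {}"
    and singleton: "\<And>v. v \<in> V \<Longrightarrow> P {v}"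
    and insert: "\<And>W w e. W \<subseteq> V \<Longrightarrow> connected_set W \<Longrightarrow> w \<in> W \<Longrightarrow> e \<in> V - W \<Longrightarrow>
      rook_adj w e \<Longrightarrow> P W \<Longrightarrow> P (insert e W)"
  shows "P V"
proof -
  have "P V" if "W \<subseteq> V" "W \<noteq> {}" "connected_set W" "P W" for W
    using that
  proof (induction "card (V - W)" arbitrary: W rule: less_induct)
    case less
    show ?case
    proof (cases "W = V")
      case False
      then obtain w e where we: "w \<in> W" "e \<in> V - W" "rook_adj w e"
        using connected_set_grow[OF assms(2) less.prems(1,2)] by blast
      have "card (V - insert e W) < card (V - W)"
        using we assms(1) by (intro psubset_card_mono) auto
      then show ?thesis
        using less we connected_set_insert[of W w e] insert[of W w e] by blast
    qed (use less in simp)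
  qed
  then show ?thesis
    using assms(3) singleton connected_set_singleton by blast
qed

lemma is_circuit_in_iff:
  "is_circuit_in V c \<longleftrightarrow> length c \<ge> 4 \<and> distinct c \<and> set c \<subseteq> V \<and>
     (\<forall>k < length c. rook_adj (c ! k) (c ! ((k + 1) mod length c)) \<and>
        fst (c ! k) \<noteq> fst (c ! ((k + 2) mod length c)) \<and>
        snd (c ! k) \<noteq> snd (c ! ((k + 2) mod length c)))"
  unfolding is_circuit_in_def by auto

lemma is_circuit_in_mono: "is_circuit_in V c \<Longrightarrow> V \<subseteq> W \<Longrightarrow> is_circuit_in W c"
  unfolding is_circuit_in_def by blast

lemma forest_subset: "forest W \<Longrightarrow> V \<subseteq> W \<Longrightarrow> forest V"
  unfolding forest_def using is_circuit_in_mono by blast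

lemma forest_singleton: "forest {v}"
proof -
  have "length c \<le> 1" if "distinct c" "set c \<subseteq> {v}" for c
    using card_mono[OF _ that(2)] distinct_card[OF that(1)] by simp
  then show ?thesis
    unfolding forest_def is_circuit_in_def by fastforce
qed

lemma is_circuit_in_turns:
  assumes c: "is_circuit_in V c" and x: "x \<in> set c"
  shows "\<exists>u \<in> set c - {x}. \<exists>w \<in> set c - {x}.
    rook_adj u x \<and> rook_adj x w \<and> fst u \<noteq> fst w \<and> snd u \<noteq> snd w"
proof -
  define s where "s = length c"
  obtain k where k: "k < s" "c ! k = x"
    using x unfolding s_def by (auto simp: in_set_conv_nth)
  define i where "i = (k + s - 1) mod s"
  have s: "s \<ge> 4"
    using c unfolding is_circuit_in_def s_def by auto
  have shift: "(i + j) mod s = (k + s - 1 + j) mod s" for j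
    unfolding i_def by (simp add: mod_add_left_eq)
  have i: "i < s" "(i + 1) mod s = k" "(i + 2) mod s = (k + 1) mod s"
    using shift[of 1] shift[of 2] mod_add_self2[of "k + 1" s] s k by (simp_all add: i_def)
  have "rook_adj (c ! i) x" "fst (c ! i) \<noteq> fst (c ! ((k + 1) mod s))"
    "snd (c ! i) \<noteq> snd (c ! ((k + 1) mod s))"
    using c i k unfolding is_circuit_in_iff s_def by auto
  moreover have "rook_adj x (c ! ((k + 1) mod s))"
    using c k unfolding is_circuit_in_iff s_def by auto
  moreover have "c ! i \<in> set c" "c ! ((k + 1) mod s) \<in> set c"
    using i(1) s unfolding s_def by (auto intro!: nth_mem mod_less_divisor)
  ultimately show ?thesis
    unfolding rook_adj_def by blast
qed

lemma forest_insert_new_line: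
  assumes "forest W" and new: "fst e \<notin> fst ` W \<or> snd e \<notin> snd ` W"
  shows "forest (insert e W)"
  unfolding forest_def
proof
  assume "\<exists>c. is_circuit_in (insert e W) c"
  then obtain c where c: "is_circuit_in (insert e W) c" ..
  have "\<not> set c \<subseteq> W"
    using c \<open>forest W\<close> unfolding forest_def is_circuit_in_def by blast
  then have "e \<in> set c"
    using c unfolding is_circuit_in_def by blast
  then obtain u w where uw: "u \<in> set c - {e}" "w \<in> set c - {e}" "rook_adj u e" "rook_adj e w"
    and turn: "fst u \<noteq> fst w" "snd u \<noteq> snd w"
    using is_circuit_in_turns[OF c] by blast
  have "u \<in> W" "w \<in> W"
    using uw c unfolding is_circuit_in_def by auto
  with new uw(3,4) have "fst u = fst w \<or> snd u = snd w"
    unfolding rook_adj_def by (metis image_eqI)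
  with turn show False by simp
qed

definition shortest_path_between :: "cell set \<Rightarrow> cell set \<Rightarrow> cell set \<Rightarrow> cell list \<Rightarrow> bool" where
  "shortest_path_between W A B p \<longleftrightarrow> is_path_in W p \<and> hd p \<in> A \<and> last p \<in> B \<and>
     (\<forall>q. is_path_in W q \<and> hd q \<in> A \<and> last q \<in> B \<longrightarrow> length p \<le> length q)"

lemma shortest_path_between_exists:
  assumes "is_path_in W q" "hd q \<in> A" "last q \<in> B"
  shows "\<exists>p. shortest_path_between W A B p"
  using ex_has_least_nat[of "\<lambda>q. is_path_in W q \<and> hd q \<in> A \<and> last q \<in> B" q length] assms
  unfolding shortest_path_between_def by blast

context
  fixes W A B p
  assumes p: "shortest_path_between W A B p"
begin

private lemma shorter_path_contradiction:
  "is_path_in W q \<Longrightarrow> hd q \<in> A \<Longrightarrow> last q \<in> B \<Longrightarrow> length q < length p \<Longrightarrow> False"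
  using p unfolding shortest_path_between_def by fastforce

private lemma shortest_path: "is_path_in W p" "hd p \<in> A" "last p \<in> B"
  using p unfolding shortest_path_between_def by auto

lemma shortest_path_between_tail_notin:
  assumes "0 < k" "k < length p"
  shows "p ! k \<notin> A"
proof
  assume "p ! k \<in> A"
  moreover have "is_path_in W (drop k p)" "last (drop k p) = last p" "length (drop k p) < length p"
    using assms shortest_path by (simp_all add: is_path_in_drop)
  ultimately show False
    using assms shortest_path shorter_path_contradiction[of "drop k p"]
    by (simp add: hd_drop_conv_nth)
qed

lemma shortest_path_between_butlast_notin:
  assumes "Suc k < length p"
  shows "p ! k \<notin> B"
proof
  assume "p ! k \<in> B"
  moreover have "is_path_in W (take (Suc k) p)" "hd (take (Suc k) p) = hd p"
    "length (take (Suc k) p) < length p"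
    using assms shortest_path by (simp_all add: is_path_in_take)
  moreover have "last (take (Suc k) p) = p ! k"
    using assms by (simp add: take_Suc_conv_app_nth)
  ultimately show False
    using assms shortest_path shorter_path_contradiction[of "take (Suc k) p"] by simp
qed

private lemma shortcut_contradiction:
  assumes "0 < i" "i < j" "j < length p" "rook_adj (p ! (i - 1)) (p ! j)"
  shows False
proof -
  have "last (take i p) = p ! (i - 1)"
    using assms by (cases i) (simp_all add: take_Suc_conv_app_nth)
  then have "is_path_in W (take i p @ drop j p)"
    using assms shortest_path
    by (simp add: is_path_in_append is_path_in_take is_path_in_drop hd_drop_conv_nth)
  moreover have "hd (take i p @ drop j p) = hd p" "length (take i p @ drop j p) < length p"
    using assms by (auto simp: hd_append)
  ultimately show False
    using assms shortest_path shorter_path_contradiction[of "take i p @ drop j p"] by simp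
qed

lemma shortest_path_between_distinct: "distinct p"
proof -
  have neq: "p ! i \<noteq> p ! j" if ij: "i < j" "j < length p" for i j
  proof (cases "i = 0")
    case True
    then have "p ! i \<in> A"
      using shortest_path by (simp add: hd_conv_nth is_path_in_def)
    then show ?thesis
      using shortest_path_between_tail_notin[of j] ij by auto
  next
    case False
    have "Suc (i - 1) < length p" "Suc (i - 1) = i"
      using False ij by auto
    then have "rook_adj (p ! (i - 1)) (p ! i)"
      using shortest_path(1) unfolding is_path_in_def by metis
    then show ?thesis
      using shortcut_contradiction[of i j] False ij by auto
  qed
  show ?thesis
    unfolding distinct_conv_nth
  proof (intro allI impI)
    fix i j assume "i < length p" "j < length p" "i \<noteq> j"
    then show "p ! i \<noteq> p ! j"
      using neq[of i j] neq[of j i] by (cases "i < j") auto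
  qed
qed

lemma shortest_path_between_chordless:
  assumes "i + 2 \<le> j" "j < length p"
  shows "fst (p ! i) \<noteq> fst (p ! j) \<and> snd (p ! i) \<noteq> snd (p ! j)"
proof -
  have "\<not> rook_adj (p ! i) (p ! j)"
    using shortcut_contradiction[of "Suc i" j] assms by auto
  moreover have "p ! i \<noteq> p ! j"
    using shortest_path_between_distinct assms by (simp add: nth_eq_iff_index_eq)
  ultimately show ?thesis
    unfolding rook_adj_def by blast
qed

end

context
  fixes W e p
  assumes e: "e \<notin> W"
    and p: "shortest_path_between W {v. fst v = fst e} {v. snd v = snd e} p"
begin

private lemma path_ends:
  "is_path_in W p" "fst (p ! 0) = fst e" "snd (p ! (length p - 1)) = snd e"
  "\<And>k. k < length p \<Longrightarrow> p ! k \<noteq> e"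
proof -
  show path: "is_path_in W p" "fst (p ! 0) = fst e" "snd (p ! (length p - 1)) = snd e"
    using p unfolding shortest_path_between_def is_path_in_def
    by (auto simp: hd_conv_nth last_conv_nth)
  show "p ! k \<noteq> e" if "k < length p" for k
    using path(1) e nth_mem[OF that] unfolding is_path_in_def by blast
qed

lemma shortest_path_between_row_col_length: "length p \<ge> 3"
proof -
  have "length p \<noteq> 0"
    using path_ends(1) by (simp add: is_path_in_def)
  moreover have "length p \<noteq> 1"
    using path_ends(2,3) path_ends(4)[of 0] by (cases p) (auto simp: prod_eq_iff)
  moreover have "length p \<noteq> 2"
  proof
    assume "length p = 2"
    then have "rook_adj (p ! 0) (p ! 1)" "p ! 0 \<noteq> e" "p ! 1 \<noteq> e"
      using path_ends(1,4) unfolding is_path_in_def by auto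
    then show False
      using path_ends(2,3) \<open>length p = 2\<close> unfolding rook_adj_def by (auto simp: prod_eq_iff)
  qed
  ultimately show ?thesis by linarith
qed

lemma is_circuit_in_Cons_shortest_path: "is_circuit_in (insert e W) (e # p)"
proof -
  define L where "L = length p"
  have L: "L \<ge> 3" "length (e # p) = L + 1"
    using shortest_path_between_row_col_length unfolding L_def by auto
  have adj: "rook_adj (p ! i) (p ! Suc i)" if "Suc i < L" for i
    using path_ends(1) that unfolding is_path_in_def L_def by blast
  note tail = shortest_path_between_tail_notin[OF p, folded L_def, simplified]
  note butlast = shortest_path_between_butlast_notin[OF p, folded L_def, simplified]
  note chordless = shortest_path_between_chordless[OF p, folded L_def]
  have "rook_adj ((e # p) ! k) ((e # p) ! ((k + 1) mod (L + 1))) \<and>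
    fst ((e # p) ! k) \<noteq> fst ((e # p) ! ((k + 2) mod (L + 1))) \<and>
    snd ((e # p) ! k) \<noteq> snd ((e # p) ! ((k + 2) mod (L + 1)))" if k: "k < L + 1" for k
  proof -
    \<comment> \<open>the triple starting at e, the triples inside p, the one ending at e, the one centred at e\<close>
    consider "k = 0" | "0 < k" "k + 1 < L" | "k + 1 = L" | "k = L"
      using k by linarith
    then show ?thesis
    proof cases
      case 1
      then show ?thesis
        using L path_ends(2) path_ends(4)[of 0] tail[of 1] butlast[of 1]
        unfolding rook_adj_def L_def by auto
    next
      case 2
      then obtain i where "k = Suc i" "Suc (Suc i) < L"
        by (cases k) auto
      then show ?thesis
        using adj[of i] chordless[of i "Suc (Suc i)"] by (simp add: mod_less)
    next
      case 3
      then obtain i where "k = Suc i" "L = Suc (Suc i)"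
        using L by (cases k) auto
      then show ?thesis
        using adj[of i] tail[of i] butlast[of i] L by simp
    next
      case 4
      have "(L + 2) mod (L + 1) = 1"
        using L by (simp add: mod_if)
      moreover have "fst (p ! 0) \<noteq> fst (p ! (L - 1)) \<and> snd (p ! 0) \<noteq> snd (p ! (L - 1))"
        using L by (intro chordless) auto
      ultimately show ?thesis
        using 4 L path_ends(3) path_ends(4)[of "L - 1"]
        unfolding rook_adj_def L_def by (auto simp: nth_Cons')
    qed
  qed
  moreover have "distinct (e # p)" "set (e # p) \<subseteq> insert e W"
    using shortest_path_between_distinct[OF p] path_ends(1) e unfolding is_path_in_def by auto
  ultimately show ?thesis
    unfolding is_circuit_in_iff using L by simp
qed

end

lemma not_forest_insert_old_lines:
  assumes "connected_set W" "e \<notin> W" "fst e \<in> fst ` W" "snd e \<in> snd ` W"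
  shows "\<not> forest (insert e W)"
proof -
  obtain a b where a: "a \<in> W" "fst a = fst e" and b: "b \<in> W" "snd b = snd e"
    using assms(3,4) by (metis imageE)
  then have "joined_in W a b"
    using assms(1) unfolding connected_set_iff by blast
  then obtain q where "is_path_in W q" "hd q = a" "last q = b"
    unfolding joined_in_def by blast
  then obtain p where "shortest_path_between W {v. fst v = fst e} {v. snd v = snd e} p"
    using shortest_path_between_exists[of W q "{v. fst v = fst e}" "{v. snd v = snd e}"] a b
    by auto
  then have "is_circuit_in (insert e W) (e # p)"
    by (rule is_circuit_in_Cons_shortest_path[OF assms(2)])
  then show ?thesis
    unfolding forest_def by blast
qed

definition line_count :: "cell set \<Rightarrow> nat" where
  "line_count V = card (fst ` V) + card (snd ` V)"

lemma line_count_insert: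
  "finite W \<Longrightarrow> line_count (insert e W) =
     line_count W + (if fst e \<in> fst ` W then 0 else 1) + (if snd e \<in> snd ` W then 0 else 1)"
  unfolding line_count_def by (simp add: card_insert_if)

lemma line_count_connected:
  assumes "finite V" "connected_set V" "V \<noteq> {}"
  shows "forest V \<and> line_count V = card V + 1 \<or> \<not> forest V \<and> line_count V \<le> card V"
  using assms
proof (induction rule: connected_set_induct)
  case (singleton v)
  then show ?case
    using forest_singleton by (simp add: line_count_def)
next
  case (insert W w e)
  have W: "finite W" "e \<notin> W" "card (insert e W) = card W + 1"
    using insert.hyps(1,4) finite_subset[OF _ assms(1)] by auto
  show ?case
  proof (cases "fst e \<in> fst ` W \<and> snd e \<in> snd ` W")
    case True
    then have "\<not> forest (insert e W)" "line_count (insert e W) = line_count W"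
      using not_forest_insert_old_lines[OF insert.hyps(2)] W by (simp_all add: line_count_insert)
    then show ?thesis
      using insert.IH W by auto
  next
    case False
    have "fst e \<in> fst ` W \<or> snd e \<in> snd ` W"
      using insert.hyps(3,5) unfolding rook_adj_def by (metis image_eqI)
    then have "line_count (insert e W) = line_count W + 1"
      using False W by (auto simp: line_count_insert)
    moreover have "forest (insert e W) \<longleftrightarrow> forest W"
      using False forest_insert_new_line[of W e] forest_subset[of "insert e W" W] by blast
    ultimately show ?thesis
      using insert.IH W by auto
  qed
qed

lemma equiv_joined_in: "equiv V {(u, v). u \<in> V \<and> v \<in> V \<and> joined_in V u v}"
  by (auto simp: equiv_def refl_on_def sym_def trans_def
      intro: joined_in_refl joined_in_sym joined_in_trans)

lemma components_connected:
  assumes K: "K \<in> components V"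
  shows "connected_set K"
  unfolding connected_set_iff
proof (intro ballI)
  fix u v assume uv: "u \<in> K" "v \<in> K"
  have closed: "x \<in> K" if "joined_in V u x" for x
    using in_quotient_imp_closed[OF equiv_joined_in K[unfolded components_def] uv(1)]
      joined_in_imp_mem[OF that] that by blast
  have "{u, v} \<subseteq> K"
    using uv by blast
  then obtain p where p: "is_path_in V p" "hd p = u" "last p = v"
    using in_quotient_imp_in_rel[OF equiv_joined_in K[unfolded components_def]]
    unfolding joined_in_def by blast
  then have "set p \<subseteq> K"
    using closed joined_in_hd_mem by blast
  then have "is_path_in K p"
    using p(1) unfolding is_path_in_def by blast
  then show "joined_in K u v"
    using p unfolding joined_in_def by blast
qed

lemma components_lines_disjoint:
  assumes K: "K \<in> components V" and K': "K' \<in> components V" and "K \<noteq> K'"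
  shows "fst ` K \<inter> fst ` K' = {}" "snd ` K \<inter> snd ` K' = {}"
proof -
  note quotient = K[unfolded components_def] K'[unfolded components_def]
  have False if "u \<in> K" "v \<in> K'" "fst u = fst v \<or> snd u = snd v" for u v
  proof -
    have "u \<noteq> v"
      using quotient_disj[OF equiv_joined_in quotient] \<open>K \<noteq> K'\<close> that(1,2) by blast
    moreover have "u \<in> V" "v \<in> V"
      using that(1,2) in_quotient_imp_subset[OF equiv_joined_in] quotient by blast+
    ultimately have "joined_in V u v"
      using that(3) by (simp add: joined_in_if_rook_adj rook_adj_def)
    then have "v \<in> K"
      using in_quotient_imp_closed[OF equiv_joined_in quotient(1) that(1)] \<open>u \<in> V\<close> \<open>v \<in> V\<close>
      by blast
    then show False
      using quotient_disj[OF equiv_joined_in quotient] \<open>K \<noteq> K'\<close> that(2) by blast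
  qed
  then show "fst ` K \<inter> fst ` K' = {}" "snd ` K \<inter> snd ` K' = {}"
    by auto
qed

lemma line_count_forest:
  assumes "finite V" "forest V"
  shows "line_count V = card V + card (components V)"
proof -
  define C where "C = components V"
  have V: "V = \<Union> C"
    using Union_quotient[OF equiv_joined_in] unfolding C_def components_def by simp
  have K: "K \<subseteq> V" "K \<noteq> {}" "connected_set K" if "K \<in> C" for K
    using that in_quotient_imp_subset[OF equiv_joined_in] in_quotient_imp_non_empty[OF equiv_joined_in]
      components_connected unfolding C_def components_def by auto
  have finite: "finite C" "\<And>K. K \<in> C \<Longrightarrow> finite K"
    using assms(1) V K(1) finite_UnionD finite_subset by metis+
  have line_count_K: "line_count K = card K + 1" if "K \<in> C" for K
    using line_count_connected[OF finite(2)[OF that] K(3)[OF that] K(2)[OF that]]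
      forest_subset[OF assms(2) K(1)[OF that]] by blast
  have disjoint: "K \<inter> K' = {}" "fst ` K \<inter> fst ` K' = {}" "snd ` K \<inter> snd ` K' = {}"
    if "K \<in> C" "K' \<in> C" "K \<noteq> K'" for K K'
    using that quotient_disj[OF equiv_joined_in] components_lines_disjoint[of K V K']
    unfolding C_def components_def by auto
  have "card V = (\<Sum>K\<in>C. card K)"
    unfolding V using card_UN_disjoint[of C id] finite disjoint(1) by simp
  moreover have "line_count V = (\<Sum>K\<in>C. line_count K)"
    unfolding V line_count_def image_Union sum.distrib
    using card_UN_disjoint[of C "image fst"] card_UN_disjoint[of C "image snd"] finite disjoint(2,3)
    by simp
  ultimately show ?thesis
    using line_count_K by (simp add: sum_Suc C_def)
qed

lemma complete_iff_line_count:
  assumes "V \<subseteq> grid m n"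
  shows "complete m n V \<longleftrightarrow> line_count V = m + n"
proof -
  have sub: "fst ` V \<subseteq> {1..m}" "snd ` V \<subseteq> {1..n}"
    using assms unfolding grid_def by auto
  have le: "card (fst ` V) \<le> m" "card (snd ` V) \<le> n"
    using card_mono[OF _ sub(1)] card_mono[OF _ sub(2)] by simp_all
  have "line_count V = m + n \<longleftrightarrow> card (fst ` V) = card {1..m} \<and> card (snd ` V) = card {1..n}"
    using le unfolding line_count_def by auto
  also have "\<dots> \<longleftrightarrow> complete m n V"
    unfolding complete_def using card_subset_eq[OF _ sub(1)] card_subset_eq[OF _ sub(2)] by auto
  finally show ?thesis ..
qed

theorem proposition1p1:
  fixes m n :: nat and V :: "(nat \<times> nat) set"
  assumes "m \<ge> 2" and "n \<ge> 2" and "V \<subseteq> grid m n"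
  shows "(\<forall>k. forest V \<and> card (components V) = k \<longrightarrow>
            (complete m n V \<longleftrightarrow> int (card V) = int m + int n - int k))
       \<and> (card V = m + n - 1 \<longrightarrow> (tree V \<longleftrightarrow> complete m n V \<and> connected_set V))
       \<and> (complete m n V \<and> connected_set V \<longrightarrow>
            card V \<ge> m + n - 1 \<and> (card V = m + n - 1 \<longleftrightarrow> tree V))"
proof -
  have "finite V"
    using assms(3) finite_subset unfolding grid_def by blast
  note complete = complete_iff_line_count[OF assms(3)]
  note forest = line_count_forest[OF \<open>finite V\<close>]
  note connected = line_count_connected[OF \<open>finite V\<close>]
  have nonempty: "V \<noteq> {}" if "complete m n V \<or> card V = m + n - 1"
    using that assms(1,2) unfolding complete_def by auto
  have "complete m n V \<longleftrightarrow> int (card V) = int m + int n - int (card (components V))"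
    if "forest V"
    using complete forest[OF that] by linarith
  moreover have "tree V \<longleftrightarrow> complete m n V \<and> connected_set V" if "card V = m + n - 1"
    using complete connected[OF _ nonempty] that assms(1,2) unfolding tree_def by auto
  moreover have "card V \<ge> m + n - 1 \<and> (card V = m + n - 1 \<longleftrightarrow> tree V)"
    if "complete m n V" "connected_set V"
    using complete connected[OF that(2) nonempty] that assms(1,2) unfolding tree_def by auto
  ultimately show ?thesis
    by blast
qed

end
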